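(* Let $F(x)$ be a formula in prenex form with no free variables other than $x$. If the sentence $\forall xF(x)$ is safe, or the sentence $\exists xF(x)$ is safe, then the sentence $F(c)$ is safe for every object constant $c$.
   Context: Formulas are first-order formulas with object constants, predicate constants and equality, but no function constants of arity $>0$; primitive connectives $\bot,\land,\lor,\rightarrow$, quantifiers $\forall,\exists$; $\neg F$ is $F\rightarrow\bot$, $\top$ is $\bot\rightarrow\bot$. Restricted variables: for quantifier-free $G$, $\mathrm{RV}(G)$ is: $\emptyset$ if $G$ is an equality between two variables; the set of variables of $G$ if $G$ is any other atomic formula; $\mathrm{RV}(\bot)=\emptyset$; $\mathrm{RV}(G\land H)=\mathrm{RV}(G)\cup\mathrm{RV}(H)$; $\mathrm{RV}(G\lor H)=\mathrm{RV}(G)\cap\mathrm{RV}(H)$; $\mathrm{RV}(G\rightarrow H)=\emptyset$. An occurrence of a subformula or variable is positive if the number of implications containing it in their antecedent is even, negative otherwise, and strictly positive if it is in the antecedent of no implication. A prenex sentence $Q_1x_1\cdots Q_nx_nM$ ($M$ quantifier-free, $x_i$ distinct) is semi-safe if every strictly positive occurrence of every $x_i$ in $M$ belongs to a subformula $G\rightarrow H$ with $x_i\in\mathrm{RV}(G)$. Simplification transformations: $\neg\bot\mapsto\top$, $\neg\top\mapsto\bot$; $\bot\land G\mapsto\bot$, $G\land\bot\mapsto\bot$, $\top\land G\mapsto G$, $G\land\top\mapsto G$; $\bot\lor G\mapsto G$, $G\lor\bot\mapsto G$, $\top\lor G\mapsto\top$, $G\lor\top\mapsto\top$; $\bot\rightarrow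 G\mapsto\top$, $G\rightarrow\top\mapsto\top$, $\top\rightarrow G\mapsto G$. A variable $x$ is positively (resp. negatively) weakly restricted in a quantifier-free formula $G$ if the formula obtained from $G$ by first replacing every atomic formula $A$ of $G$ with $x\in\mathrm{RV}(A)$ by $\bot$ and then applying the simplification transformations is $\top$ (resp. $\bot$). A semi-safe prenex sentence $Q_1x_1\cdots Q_nx_nM$ is safe if for every occurrence of every variable $x_i$: (a) if $Q_i=\forall$, the occurrence belongs to a positive subformula (of the sentence) in which $x_i$ is positively weakly restricted, or to a negative subformula in which $x_i$ is negatively weakly restricted; (b) if $Q_i=\exists$, the occurrence belongs to a negative subformula in which $x_i$ is positively weakly restricted, or to a positive subformula in which $x_i$ is negatively weakly restricted. *)

theory Defs
  imports Main
begin

datatype ('c, 'v) trm = Var 'v | Cst 'c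

datatype ('p, 'c, 'v) fm =
    Bot
  | Pred 'p "('c, 'v) trm list"
  | Eq "('c, 'v) trm" "('c, 'v) trm"
  | And "('p, 'c, 'v) fm" "('p, 'c, 'v) fm"
  | Or "('p, 'c, 'v) fm" "('p, 'c, 'v) fm"
  | Imp "('p, 'c, 'v) fm" "('p, 'c, 'v) fm"
  | All 'v "('p, 'c, 'v) fm"
  | Ex 'v "('p, 'c, 'v) fm"

text \<open>Top is Bot \<rightarrow> Bot; negation of F is F \<rightarrow> Bot.\<close>
abbreviation Top :: "('p, 'c, 'v) fm" where "Top \<equiv> Imp Bot Bot"

fun tvars :: "('c, 'v) trm \<Rightarrow> 'v set" where
  "tvars (Var v) = {v}"
| "tvars (Cst c) = {}"

fun fv :: "('p, 'c, 'v) fm \<Rightarrow> 'v set" where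
  "fv Bot = {}"
| "fv (Pred p ts) = (\<Union>t\<in>set ts. tvars t)"
| "fv (Eq s t) = tvars s \<union> tvars t"
| "fv (And a b) = fv a \<union> fv b"
| "fv (Or a b) = fv a \<union> fv b"
| "fv (Imp a b) = fv a \<union> fv b"
| "fv (All x a) = fv a - {x}"
| "fv (Ex x a) = fv a - {x}"

fun qfree :: "('p, 'c, 'v) fm \<Rightarrow> bool" where
  "qfree Bot = True"
| "qfree (Pred p ts) = True"
| "qfree (Eq s t) = True"
| "qfree (And a b) = (qfree a \<and> qfree b)"
| "qfree (Or a b) = (qfree a \<and> qfree b)"
| "qfree (Imp a b) = (qfree a \<and> qfree b)"
| "qfree (All x a) = False"
| "qfree (Ex x a) = False"

fun is_atom :: "('p, 'c, 'v) fm \<Rightarrow> bool" where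
  "is_atom (Pred p ts) = True"
| "is_atom (Eq s t) = True"
| "is_atom _ = False"

fun tsubst :: "'v \<Rightarrow> 'c \<Rightarrow> ('c, 'v) trm \<Rightarrow> ('c, 'v) trm" where
  "tsubst x c (Var y) = (if y = x then Cst c else Var y)"
| "tsubst x c (Cst d) = Cst d"

fun subst :: "'v \<Rightarrow> 'c \<Rightarrow> ('p, 'c, 'v) fm \<Rightarrow> ('p, 'c, 'v) fm" where
  "subst x c Bot = Bot"
| "subst x c (Pred p ts) = Pred p (map (tsubst x c) ts)"
| "subst x c (Eq s t) = Eq (tsubst x c s) (tsubst x c t)"
| "subst x c (And a b) = And (subst x c a) (subst x c b)"
| "subst x c (Or a b) = Or (subst x c a) (subst x c b)"
| "subst x c (Imp a b) = Imp (subst x c a) (subst x c b)"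
| "subst x c (All y a) = (if y = x then All y a else All y (subst x c a))"
| "subst x c (Ex y a) = (if y = x then Ex y a else Ex y (subst x c a))"

datatype quant = QAll | QEx

fun quants :: "(quant \<times> 'v) list \<Rightarrow> ('p, 'c, 'v) fm \<Rightarrow> ('p, 'c, 'v) fm" where
  "quants [] M = M"
| "quants ((QAll, x) # qs) M = All x (quants qs M)"
| "quants ((QEx, x) # qs) M = Ex x (quants qs M)"

definition prenex :: "('p, 'c, 'v) fm \<Rightarrow> bool" where
  "prenex F \<longleftrightarrow> (\<exists>qs M. F = quants qs M \<and> qfree M)"

fun RV :: "('p, 'c, 'v) fm \<Rightarrow> 'v set" where
  "RV Bot = {}"
| "RV (Pred p ts) = (\<Union>t\<in>set ts. tvars t)"
| "RV (Eq s t) = (case (s, t) of (Var _, Var _) \<Rightarrow> {} | _ \<Rightarrow> tvars s \<union> tvars t)"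
| "RV (And a b) = RV a \<union> RV b"
| "RV (Or a b) = RV a \<inter> RV b"
| "RV (Imp a b) = {}"
| "RV (All x a) = {}"
| "RV (Ex x a) = {}"

text \<open>Positions are paths; 0 = left argument (antecedent for Imp), 1 = right argument.\<close>
fun subAt :: "('p, 'c, 'v) fm \<Rightarrow> nat list \<Rightarrow> ('p, 'c, 'v) fm option" where
  "subAt f [] = Some f"
| "subAt (And a b) (i # p) = (if i = 0 then subAt a p else if i = 1 then subAt b p else None)"
| "subAt (Or a b) (i # p) = (if i = 0 then subAt a p else if i = 1 then subAt b p else None)"
| "subAt (Imp a b) (i # p) = (if i = 0 then subAt a p else if i = 1 then subAt b p else None)"
| "subAt _ (i # p) = None"

fun nimp :: "('p, 'c, 'v) fm \<Rightarrow> nat list \<Rightarrow> nat" where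
  "nimp f [] = 0"
| "nimp (And a b) (i # p) = (if i = 0 then nimp a p else nimp b p)"
| "nimp (Or a b) (i # p) = (if i = 0 then nimp a p else nimp b p)"
| "nimp (Imp a b) (i # p) = (if i = 0 then Suc (nimp a p) else nimp b p)"
| "nimp _ (i # p) = 0"

text \<open>Positions of the atomic formulas of M in which the variable x occurs
  (each occurrence of x lies inside exactly such an atom).\<close>
definition occ :: "('p, 'c, 'v) fm \<Rightarrow> 'v \<Rightarrow> nat list \<Rightarrow> bool" where
  "occ M x p \<longleftrightarrow> (\<exists>A. subAt M p = Some A \<and> is_atom A \<and> x \<in> fv A)"

definition sAnd :: "('p, 'c, 'v) fm \<Rightarrow> ('p, 'c, 'v) fm \<Rightarrow> ('p, 'c, 'v) fm" where
  "sAnd a b = (if a = Bot \<or> b = Bot then Bot else if a = Top then b else if b = Top then a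
              else And a b)"

definition sOr :: "('p, 'c, 'v) fm \<Rightarrow> ('p, 'c, 'v) fm \<Rightarrow> ('p, 'c, 'v) fm" where
  "sOr a b = (if a = Top \<or> b = Top then Top else if a = Bot then b else if b = Bot then a
              else Or a b)"

definition sImp :: "('p, 'c, 'v) fm \<Rightarrow> ('p, 'c, 'v) fm \<Rightarrow> ('p, 'c, 'v) fm" where
  "sImp a b = (if a = Bot \<or> b = Top then Top else if a = Top then b else Imp a b)"

text \<open>Exhaustive application of the simplification transformations (bottom-up).\<close>
fun simpl :: "('p, 'c, 'v) fm \<Rightarrow> ('p, 'c, 'v) fm" where
  "simpl (And a b) = sAnd (simpl a) (simpl b)"
| "simpl (Or a b) = sOr (simpl a) (simpl b)"
| "simpl (Imp a b) = sImp (simpl a) (simpl b)"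
| "simpl f = f"

fun kill :: "'v \<Rightarrow> ('p, 'c, 'v) fm \<Rightarrow> ('p, 'c, 'v) fm" where
  "kill x (Pred p ts) = (if x \<in> RV (Pred p ts) then Bot else Pred p ts)"
| "kill x (Eq s t) = (if x \<in> RV (Eq s t :: ('p, 'c, 'v) fm) then Bot else Eq s t)"
| "kill x (And a b) = And (kill x a) (kill x b)"
| "kill x (Or a b) = Or (kill x a) (kill x b)"
| "kill x (Imp a b) = Imp (kill x a) (kill x b)"
| "kill x Bot = Bot"
| "kill x (All y a) = All y a"
| "kill x (Ex y a) = Ex y a"

definition pos_wr :: "'v \<Rightarrow> ('p, 'c, 'v) fm \<Rightarrow> bool" where
  "pos_wr x G \<longleftrightarrow> simpl (kill x G) = Top"

definition neg_wr :: "'v \<Rightarrow> ('p, 'c, 'v) fm \<Rightarrow> bool" where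
  "neg_wr x G \<longleftrightarrow> simpl (kill x G) = Bot"

definition prenex_sentence :: "(quant \<times> 'v) list \<Rightarrow> ('p, 'c, 'v) fm \<Rightarrow> bool" where
  "prenex_sentence qs M \<longleftrightarrow> qfree M \<and> distinct (map snd qs) \<and> fv (quants qs M) = {}"

definition semi_safe_cond :: "(quant \<times> 'v) list \<Rightarrow> ('p, 'c, 'v) fm \<Rightarrow> bool" where
  "semi_safe_cond qs M \<longleftrightarrow>
     (\<forall>x \<in> set (map snd qs). \<forall>p. occ M x p \<and> nimp M p = 0 \<longrightarrow>
        (\<exists>q r G H. p = q @ r \<and> subAt M q = Some (Imp G H) \<and> x \<in> RV G))"

definition safe_cond :: "(quant \<times> 'v) list \<Rightarrow> ('p, 'c, 'v) fm \<Rightarrow> bool" where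
  "safe_cond qs M \<longleftrightarrow>
     (\<forall>(Q, x) \<in> set qs. \<forall>p. occ M x p \<longrightarrow>
        (\<exists>q r G. p = q @ r \<and> subAt M q = Some G \<and>
           (if Q = QAll
            then (even (nimp M q) \<and> pos_wr x G) \<or> (odd (nimp M q) \<and> neg_wr x G)
            else (odd (nimp M q) \<and> pos_wr x G) \<or> (even (nimp M q) \<and> neg_wr x G))))"

definition semi_safe :: "('p, 'c, 'v) fm \<Rightarrow> bool" where
  "semi_safe F \<longleftrightarrow> (\<exists>qs M. F = quants qs M \<and> prenex_sentence qs M \<and> semi_safe_cond qs M)"

definition safe :: "('p, 'c, 'v) fm \<Rightarrow> bool" where
  "safe F \<longleftrightarrow> (\<exists>qs M. F = quants qs M \<and> prenex_sentence qs M \<and> semi_safe_cond qs M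
                        \<and> safe_cond qs M)"

end

theory Submission
  imports Defs
begin

text \<open>Substituting a constant for the outermost variable x leaves the positions and polarities
  of all atoms unchanged and can only enlarge the sets of restricted variables.  Hence every
  occurrence of another quantified variable y is still guarded by the same implication, or lies in
  the same subformula in which y is weakly restricted, so the semi-safety and safety witnesses for
  y carry over verbatim.\<close>

lemma sAnd_eq_Top_iff: "sAnd a b = Top \<longleftrightarrow> a = Top \<and> b = Top"
  by (auto simp: sAnd_def)

lemma sAnd_eq_Bot_iff: "sAnd a b = Bot \<longleftrightarrow> a = Bot \<or> b = Bot"
  by (auto simp: sAnd_def)

lemma sOr_eq_Top_iff: "sOr a b = Top \<longleftrightarrow> a = Top \<or> b = Top"
  by (auto simp: sOr_def)

lemma sOr_eq_Bot_iff: "sOr a b = Bot \<longleftrightarrow> a = Bot \<and> b = Bot"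
  by (auto simp: sOr_def)

lemma sImp_eq_Top_iff: "sImp a b = Top \<longleftrightarrow> a = Bot \<or> b = Top"
  by (auto simp: sImp_def)

lemma sImp_eq_Bot_iff: "sImp a b = Bot \<longleftrightarrow> a = Top \<and> b = Bot"
  by (auto simp: sImp_def)

lemmas simp_connective_eq_Top_Bot_iff =
  sAnd_eq_Top_iff sAnd_eq_Bot_iff sOr_eq_Top_iff sOr_eq_Bot_iff sImp_eq_Top_iff sImp_eq_Bot_iff

lemma tvars_tsubst [simp]: "tvars (tsubst x c t) = tvars t - {x}"
  by (cases t) auto

lemma fv_subst [simp]: "fv (subst x c F) = fv F - {x}"
  by (induction F) auto

lemma qfree_subst [simp]: "qfree (subst x c F) = qfree F"
  by (induction F) auto

lemma is_atom_subst [simp]: "is_atom (subst x c F) = is_atom F"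
  by (cases F) auto

lemma RV_subst: "y \<in> RV G \<Longrightarrow> y \<noteq> x \<Longrightarrow> y \<in> RV (subst x c G)"
proof (induction G)
  case (Eq s t)
  then show ?case
    by (cases s; cases t) (auto split: if_splits)
qed auto

text \<open>Whether the simplified formula is \<open>Top\<close> or \<open>Bot\<close> depends only on the atoms that are
  replaced by \<open>Bot\<close>, and substitution keeps every such atom replaced (by \<open>RV_subst\<close>).\<close>

lemma simpl_kill_subst:
  assumes "y \<noteq> x"
  shows "(simpl (kill y G) = Top \<longrightarrow> simpl (kill y (subst x c G)) = Top) \<and>
         (simpl (kill y G) = Bot \<longrightarrow> simpl (kill y (subst x c G)) = Bot)"
proof (induction G)
  case (Pred p ts)
  show ?case
    using RV_subst[OF _ assms, of "Pred p ts" c] by (auto simp del: RV.simps)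
next
  case (Eq s t)
  show ?case
    using RV_subst[OF _ assms, of "Eq s t" c] by (auto simp del: RV.simps)
qed (auto simp: simp_connective_eq_Top_Bot_iff)

lemma pos_wr_subst: "y \<noteq> x \<Longrightarrow> pos_wr y G \<Longrightarrow> pos_wr y (subst x c G)"
  unfolding pos_wr_def using simpl_kill_subst[of y x G c] by blast

lemma neg_wr_subst: "y \<noteq> x \<Longrightarrow> neg_wr y G \<Longrightarrow> neg_wr y (subst x c G)"
  unfolding neg_wr_def using simpl_kill_subst[of y x G c] by blast

lemma subAt_subst: "subAt (subst x c M) p = map_option (subst x c) (subAt M p)"
  by (induction M p rule: subAt.induct) auto

lemma nimp_subst [simp]: "nimp (subst x c M) p = nimp M p"
  by (induction M p rule: nimp.induct) auto

lemma occ_subst: "y \<noteq> x \<Longrightarrow> occ (subst x c M) y p \<Longrightarrow> occ M y p"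
  by (auto simp: occ_def subAt_subst)

lemma subst_quants: "x \<notin> snd ` set qs \<Longrightarrow> subst x c (quants qs M) = quants qs (subst x c M)"
proof (induction qs)
  case (Cons q qs)
  then show ?case
    by (cases q; cases "fst q") auto
qed simp

lemma quants_eq_All_or_Ex:
  assumes "All x F = quants qs M \<or> Ex x F = quants qs M" and "qfree M"
  shows "\<exists>Q qs'. qs = (Q, x) # qs' \<and> F = quants qs' M"
proof (cases qs)
  case Nil
  with assms show ?thesis
    by auto
next
  case (Cons q qs')
  obtain Q y where "q = (Q, y)"
    by fastforce
  with Cons assms(1) show ?thesis
    by (cases Q) auto
qed

lemma prenex_sentence_subst:
  assumes "prenex_sentence ((Q, x) # qs) M"
  shows "prenex_sentence qs (subst x c M)"
proof -
  have "x \<notin> snd ` set qs"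
    using assms by (simp add: prenex_sentence_def)
  then have "fv (quants qs (subst x c M)) = fv (quants qs M) - {x}"
    by (simp flip: subst_quants)
  also have "\<dots> = {}"
    using assms by (cases Q) (auto simp: prenex_sentence_def)
  finally show ?thesis
    using assms by (simp add: prenex_sentence_def)
qed

lemma semi_safe_cond_subst:
  assumes "semi_safe_cond qs M" and "set qs' \<subseteq> set qs" and "x \<notin> snd ` set qs'"
  shows "semi_safe_cond qs' (subst x c M)"
  unfolding semi_safe_cond_def
proof (intro ballI allI impI)
  fix y p
  assume y: "y \<in> set (map snd qs')" and occ: "occ (subst x c M) y p \<and> nimp (subst x c M) p = 0"
  have "y \<noteq> x"
    using y assms(3) by auto
  with occ have "occ M y p \<and> nimp M p = 0"
    using occ_subst[of y x c M p] by simp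
  moreover have "y \<in> set (map snd qs)"
    using y assms(2) by auto
  with assms(1) have "\<forall>p. occ M y p \<and> nimp M p = 0 \<longrightarrow>
      (\<exists>q r G H. p = q @ r \<and> subAt M q = Some (Imp G H) \<and> y \<in> RV G)"
    unfolding semi_safe_cond_def by (rule bspec)
  ultimately obtain q r G H where "p = q @ r" "subAt M q = Some (Imp G H)" "y \<in> RV G"
    by blast
  moreover have "y \<in> RV (subst x c G)"
    using \<open>y \<in> RV G\<close> \<open>y \<noteq> x\<close> by (rule RV_subst)
  ultimately show "\<exists>q r G H. p = q @ r \<and> subAt (subst x c M) q = Some (Imp G H) \<and> y \<in> RV G"
    by (intro exI[of _ q] exI[of _ r] exI[of _ "subst x c G"] exI[of _ "subst x c H"])
      (simp add: subAt_subst)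
qed

lemma safe_cond_subst:
  assumes "safe_cond qs M" and "set qs' \<subseteq> set qs" and "x \<notin> snd ` set qs'"
  shows "safe_cond qs' (subst x c M)"
  unfolding safe_cond_def
proof (intro ballI allI impI, clarify)
  fix Q y p
  assume y: "(Q, y) \<in> set qs'" and occ: "occ (subst x c M) y p"
  have "y \<noteq> x"
    using y assms(3) by force
  with occ have "occ M y p"
    by (rule occ_subst[rotated])
  moreover have "(Q, y) \<in> set qs"
    using y assms(2) by auto
  then have "\<forall>p. occ M y p \<longrightarrow>
      (\<exists>q r G. p = q @ r \<and> subAt M q = Some G \<and>
         (if Q = QAll
          then (even (nimp M q) \<and> pos_wr y G) \<or> (odd (nimp M q) \<and> neg_wr y G)
          else (odd (nimp M q) \<and> pos_wr y G) \<or> (even (nimp M q) \<and> neg_wr y G)))"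
    using assms(1) unfolding safe_cond_def by blast
  ultimately obtain q r G where g:
    "p = q @ r" "subAt M q = Some G"
    "if Q = QAll
     then (even (nimp M q) \<and> pos_wr y G) \<or> (odd (nimp M q) \<and> neg_wr y G)
     else (odd (nimp M q) \<and> pos_wr y G) \<or> (even (nimp M q) \<and> neg_wr y G)"
    by blast
  show "\<exists>q r G. p = q @ r \<and> subAt (subst x c M) q = Some G \<and>
     (if Q = QAll
      then (even (nimp (subst x c M) q) \<and> pos_wr y G) \<or> (odd (nimp (subst x c M) q) \<and> neg_wr y G)
      else (odd (nimp (subst x c M) q) \<and> pos_wr y G) \<or> (even (nimp (subst x c M) q) \<and> neg_wr y G))"
  proof (intro exI conjI)
    show "p = q @ r"
      by (fact g(1))
    show "subAt (subst x c M) q = Some (subst x c G)"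
      using g(2) by (simp add: subAt_subst)
    show "if Q = QAll
      then (even (nimp (subst x c M) q) \<and> pos_wr y (subst x c G))
        \<or> (odd (nimp (subst x c M) q) \<and> neg_wr y (subst x c G))
      else (odd (nimp (subst x c M) q) \<and> pos_wr y (subst x c G))
        \<or> (even (nimp (subst x c M) q) \<and> neg_wr y (subst x c G))"
      using g(3) pos_wr_subst[OF \<open>y \<noteq> x\<close>, of G c] neg_wr_subst[OF \<open>y \<noteq> x\<close>, of G c]
      by (cases "Q = QAll") (simp_all, blast+)
  qed
qed

lemma safe_subst_body:
  assumes "safe (All x F) \<or> safe (Ex x F)"
  shows "safe (subst x c F)"
proof -
  obtain qs M where safe: "All x F = quants qs M \<or> Ex x F = quants qs M"
    "prenex_sentence qs M" "semi_safe_cond qs M" "safe_cond qs M"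
    using assms unfolding safe_def by blast
  moreover have "qfree M"
    using safe(2) by (simp add: prenex_sentence_def)
  ultimately obtain Q qs' where qs: "qs = (Q, x) # qs'" and F: "F = quants qs' M"
    using quants_eq_All_or_Ex by meson
  have x: "x \<notin> snd ` set qs'"
    using safe(2) qs by (simp add: prenex_sentence_def)
  have "subst x c F = quants qs' (subst x c M)"
    using F x by (simp add: subst_quants)
  moreover have "prenex_sentence qs' (subst x c M)"
    using safe(2) unfolding qs by (rule prenex_sentence_subst)
  moreover have "semi_safe_cond qs' (subst x c M)"
    by (rule semi_safe_cond_subst[OF safe(3) _ x]) (auto simp: qs)
  moreover have "safe_cond qs' (subst x c M)"
    by (rule safe_cond_subst[OF safe(4) _ x]) (auto simp: qs)
  ultimately show ?thesis
    unfolding safe_def by blast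
qed

theorem lemma5:
  fixes F :: "('p, 'c, 'v) fm" and x :: 'v
  assumes "prenex F"
    and "fv F \<subseteq> {x}"
    and "safe (All x F) \<or> safe (Ex x F)"
  shows "\<forall>c. safe (subst x c F)"
  using safe_subst_body[OF assms(3)] by blast

end
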